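(* For integers $n\ge1$, $m\ge0$ let $d_{n,m}=\operatorname{Tr}(J_nB_n^{2m})$. Then $d_{n,0}=1+d_{n-1,0}=n$ (for $n\ge2$; $d_{1,0}=1$), $d_{1,m}=\delta_{0,m}$, and for $n\ge2$, $m\ge1$, $$d_{n,m}=d_{n-1,m}+\sum_{k=0}^{m-1}d_{n-1,k}\,d_{n,m-k-1}.$$
   Context: $J_n$ is the $n\times n$ all-ones matrix, and $B_n=i\,M$ where $M$ is the $n\times n$ matrix with zero diagonal, entries $1$ above and $-1$ below the diagonal ($B_1$ is the $1\times1$ zero matrix). $\delta$ is the Kronecker delta. *)

theory Defs
  imports Complex_Main "Jordan_Normal_Form.Matrix"
begin

definition Jmat :: "nat \<Rightarrow> complex mat" where
  "Jmat n = mat n n (\<lambda>_. 1)"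

definition Bmat :: "nat \<Rightarrow> complex mat" where
  "Bmat n = mat n n (\<lambda>(i, j). if i < j then \<i> else if j < i then - \<i> else 0)"

definition mtrace :: "complex mat \<Rightarrow> complex" where
  "mtrace A = (\<Sum>i<dim_row A. A $$ (i, i))"

definition dnm :: "nat \<Rightarrow> nat \<Rightarrow> complex" where
  "dnm n m = mtrace (Jmat n * (Bmat n ^\<^sub>m (2 * m)))"

end

theory Submission imports Defs begin

text \<open>
  dnm n m is the sum of all entries of B_n^(2m). Reversing the order of the indices negates
  B_n, so the entry sums of odd powers vanish. Since the entries of B_n do not depend on n,
  B_n is B_(n-1) bordered by a last column of i's and a last row of -i's. Write the row vector
  1^T B_n^M as (x_M, p_M), let q_M be the sum of the entries of x_M and t_M the entry sum of
  B_(n-1)^M. Then p_(M+1) = i q_M and x_(M+1) = x_M B_(n-1) - i p_M 1^T, whence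
  q_M = t_M - i (sum of p_a t_(M-1-a) over a < M). Eliminating p and q from the entry sum
  p_(M+2) + q_(M+2) of B_n^(M+2) leaves t_(M+2) plus the convolution of p + q with t, and
  dropping its vanishing odd terms gives the recursion.
\<close>

definition skew_entry :: "nat \<Rightarrow> nat \<Rightarrow> complex" where
  "skew_entry i j = (if i < j then \<i> else if j < i then - \<i> else 0)"

lemma Bmat_carrier: "Bmat n \<in> carrier_mat n n"
  by (simp add: Bmat_def)

lemma Bmat_index: "i < n \<Longrightarrow> j < n \<Longrightarrow> Bmat n $$ (i, j) = skew_entry i j"
  by (simp add: Bmat_def skew_entry_def)

fun ones_Bpow :: "nat \<Rightarrow> nat \<Rightarrow> nat \<Rightarrow> complex" where
  "ones_Bpow n 0 j = 1"
| "ones_Bpow n (Suc M) j = (\<Sum>k<n. ones_Bpow n M k * skew_entry k j)"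

definition sum_Bpow :: "nat \<Rightarrow> nat \<Rightarrow> complex" where
  "sum_Bpow n M = (\<Sum>j<n. ones_Bpow n M j)"

lemma mtrace_Jmat_mult:
  assumes "A \<in> carrier_mat n n"
  shows "mtrace (Jmat n * A) = (\<Sum>j<n. \<Sum>i<n. A $$ (i, j))"
  unfolding mtrace_def using assms
  by (intro sum.cong) (auto simp: Jmat_def scalar_prod_def atLeast0LessThan)

lemma col_sum_Bmat_pow:
  "j < n \<Longrightarrow> (\<Sum>i<n. (Bmat n ^\<^sub>m M) $$ (i, j)) = ones_Bpow n M j"
proof (induction M arbitrary: j)
  case 0
  then show ?case by (simp add: Bmat_def)
next
  case (Suc M)
  have "(\<Sum>i<n. (Bmat n ^\<^sub>m Suc M) $$ (i, j))
      = (\<Sum>i<n. \<Sum>k<n. (Bmat n ^\<^sub>m M) $$ (i, k) * skew_entry k j)"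
    using Suc.prems Bmat_carrier[of n]
    by (intro sum.cong refl) (simp add: scalar_prod_def Bmat_index atLeast0LessThan)
  also have "\<dots> = (\<Sum>k<n. (\<Sum>i<n. (Bmat n ^\<^sub>m M) $$ (i, k)) * skew_entry k j)"
    by (subst sum.swap) (simp add: sum_distrib_right)
  also have "\<dots> = ones_Bpow n (Suc M) j"
    using Suc.IH by simp
  finally show ?case .
qed

lemma dnm_eq_sum_Bpow: "dnm n m = sum_Bpow n (2 * m)"
  unfolding dnm_def sum_Bpow_def
  by (simp add: mtrace_Jmat_mult Bmat_carrier col_sum_Bmat_pow)

lemma sum_Bpow_0: "sum_Bpow n 0 = of_nat n"
  by (simp add: sum_Bpow_def)

lemma sum_Bpow_1: "sum_Bpow 1 M = (if M = 0 then 1 else 0)"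
  by (cases M) (simp_all add: sum_Bpow_def skew_entry_def)

lemma skew_entry_reflect:
  "k < n \<Longrightarrow> j < n \<Longrightarrow> skew_entry (n - Suc k) (n - Suc j) = - skew_entry k j"
  by (auto simp: skew_entry_def)

lemma ones_Bpow_reflect: "j < n \<Longrightarrow> ones_Bpow n M (n - Suc j) = (-1) ^ M * ones_Bpow n M j"
proof (induction M arbitrary: j)
  case 0
  then show ?case by simp
next
  case (Suc M)
  have "ones_Bpow n (Suc M) (n - Suc j)
      = (\<Sum>k<n. ones_Bpow n M (n - Suc k) * skew_entry (n - Suc k) (n - Suc j))"
    by (simp add: sum.nat_diff_reindex[where g = "\<lambda>k. ones_Bpow n M k * skew_entry k (n - Suc j)"])
  also have "\<dots> = (\<Sum>k<n. (-1) ^ Suc M * (ones_Bpow n M k * skew_entry k j))"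
    using Suc by (intro sum.cong refl) (simp add: skew_entry_reflect)
  also have "\<dots> = (-1) ^ Suc M * ones_Bpow n (Suc M) j"
    by (simp add: sum_distrib_left)
  finally show ?case .
qed

lemma sum_Bpow_odd: "odd M \<Longrightarrow> sum_Bpow n M = 0"
proof -
  assume "odd M"
  have "sum_Bpow n M = (\<Sum>j<n. ones_Bpow n M (n - Suc j))"
    unfolding sum_Bpow_def by (simp add: sum.nat_diff_reindex)
  also have "\<dots> = - sum_Bpow n M"
    using \<open>odd M\<close> by (simp add: ones_Bpow_reflect sum_Bpow_def sum_negf)
  finally show ?thesis by simp
qed

lemma ones_Bpow_Suc_last:
  "ones_Bpow (Suc r) (Suc M) r = \<i> * (\<Sum>j<r. ones_Bpow (Suc r) M j)"
  by (simp add: skew_entry_def sum_distrib_left mult.commute)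

lemma ones_Bpow_Suc_below:
  "j < r \<Longrightarrow> ones_Bpow (Suc r) M j
    = ones_Bpow r M j - \<i> * (\<Sum>a<M. ones_Bpow (Suc r) a r * ones_Bpow r (M - Suc a) j)"
proof (induction M arbitrary: j)
  case 0
  then show ?case by simp
next
  case (Suc M)
  let ?p = "\<lambda>a. ones_Bpow (Suc r) a r"
  have "ones_Bpow (Suc r) (Suc M) j
      = (\<Sum>k<r. ones_Bpow (Suc r) M k * skew_entry k j) - \<i> * ?p M"
    using Suc.prems by (simp add: skew_entry_def)
  also have "(\<Sum>k<r. ones_Bpow (Suc r) M k * skew_entry k j)
      = (\<Sum>k<r. ones_Bpow r M k * skew_entry k j)
        - \<i> * (\<Sum>a<M. ?p a * (\<Sum>k<r. ones_Bpow r (M - Suc a) k * skew_entry k j))"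
    by (simp add: Suc.IH left_diff_distrib sum_subtractf sum_distrib_left sum_distrib_right
        mult.assoc sum.swap[where A = "{..<r}"] del: ones_Bpow.simps)
  also have "\<dots> = ones_Bpow r (Suc M) j - \<i> * (\<Sum>a<M. ?p a * ones_Bpow r (Suc M - Suc a) j)"
    by (simp add: Suc_diff_Suc del: ones_Bpow.simps) (simp add: Suc_diff_Suc[symmetric])
  finally show ?case
    by (simp add: algebra_simps del: ones_Bpow.simps) simp
qed

lemma sum_ones_Bpow_Suc_below:
  "(\<Sum>j<r. ones_Bpow (Suc r) M j)
    = sum_Bpow r M - \<i> * (\<Sum>a<M. ones_Bpow (Suc r) a r * sum_Bpow r (M - Suc a))"
  unfolding sum_Bpow_def
  by (simp add: ones_Bpow_Suc_below sum_subtractf sum_distrib_left sum.swap[where A = "{..<r}"]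
      del: ones_Bpow.simps)

lemma sum_Bpow_Suc_Suc:
  "sum_Bpow (Suc r) (Suc (Suc M))
    = sum_Bpow r (Suc (Suc M)) + (\<Sum>a\<le>M. sum_Bpow r a * sum_Bpow (Suc r) (M - a))"
proof -
  define p where "p a = ones_Bpow (Suc r) a r" for a
  define q where "q a = (\<Sum>j<r. ones_Bpow (Suc r) a j)" for a
  define t where "t = sum_Bpow r"
  have s: "sum_Bpow (Suc r) a = q a + p a" for a
    by (simp add: sum_Bpow_def p_def q_def)
  have p_Suc: "p (Suc a) = \<i> * q a" for a
    unfolding p_def q_def by (rule ones_Bpow_Suc_last)
  have q: "q a = t a - \<i> * (\<Sum>b<a. p b * t (a - Suc b))" for a
    unfolding p_def q_def t_def by (rule sum_ones_Bpow_Suc_below)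
  have "q (Suc (Suc M)) = t (Suc (Suc M)) - \<i> * t (Suc M) + (\<Sum>b<Suc M. q b * t (M - b))"
    by (simp add: q[of "Suc (Suc M)"] sum.lessThan_Suc_shift p_Suc algebra_simps sum_distrib_left sum_negf
        del: sum.lessThan_Suc) (simp add: p_def)
  moreover have "p (Suc (Suc M)) = \<i> * t (Suc M) + (\<Sum>b<Suc M. p b * t (M - b))"
    by (simp add: p_Suc q[of "Suc M"] algebra_simps sum_distrib_left sum_negf del: sum.lessThan_Suc)
  ultimately have "sum_Bpow (Suc r) (Suc (Suc M))
      = t (Suc (Suc M)) + (\<Sum>b<Suc M. sum_Bpow (Suc r) b * t (M - b))"
    by (simp add: s algebra_simps sum.distrib del: sum.lessThan_Suc)
  also have "(\<Sum>b<Suc M. sum_Bpow (Suc r) b * t (M - b)) = (\<Sum>a\<le>M. t a * sum_Bpow (Suc r) (M - a))"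
    by (subst sum.nat_diff_reindex[symmetric]) (simp add: lessThan_Suc_atMost mult.commute)
  finally show ?thesis
    by (simp add: t_def)
qed

lemma sum_atMost_double_odd_vanish:
  fixes f :: "nat \<Rightarrow> 'a::comm_monoid_add"
  assumes "\<And>a. odd a \<Longrightarrow> f a = 0"
  shows "(\<Sum>a\<le>2 * N. f a) = (\<Sum>k\<le>N. f (2 * k))"
  by (induction N) (simp_all add: assms)

lemma dnm_Suc_Suc:
  "dnm (Suc r) (Suc N) = dnm r (Suc N) + (\<Sum>k\<le>N. dnm r k * dnm (Suc r) (N - k))"
proof -
  have "dnm (Suc r) (Suc N)
      = sum_Bpow r (2 * Suc N) + (\<Sum>a\<le>2 * N. sum_Bpow r a * sum_Bpow (Suc r) (2 * N - a))"
    using sum_Bpow_Suc_Suc[of r "2 * N"] by (simp add: dnm_eq_sum_Bpow)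
  also have "(\<Sum>a\<le>2 * N. sum_Bpow r a * sum_Bpow (Suc r) (2 * N - a))
      = (\<Sum>k\<le>N. sum_Bpow r (2 * k) * sum_Bpow (Suc r) (2 * (N - k)))"
    by (subst sum_atMost_double_odd_vanish) (simp_all add: sum_Bpow_odd right_diff_distrib')
  finally show ?thesis
    by (simp add: dnm_eq_sum_Bpow)
qed

theorem proposition5p1:
  shows "(\<forall>n\<ge>1. dnm n 0 = of_nat n)
    \<and> (\<forall>n\<ge>2. dnm n 0 = 1 + dnm (n - 1) 0)
    \<and> dnm 1 0 = 1
    \<and> (\<forall>m. dnm 1 m = (if m = 0 then 1 else 0))
    \<and> (\<forall>n\<ge>2. \<forall>m\<ge>1.
          dnm n m = dnm (n - 1) m + (\<Sum>k<m. dnm (n - 1) k * dnm n (m - k - 1)))"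
proof -
  have dnm_0: "dnm n 0 = of_nat n" for n
    by (simp add: dnm_eq_sum_Bpow sum_Bpow_0)
  have dnm_1: "dnm 1 m = (if m = 0 then 1 else 0)" for m
    using sum_Bpow_1[of "2 * m"] by (simp add: dnm_eq_sum_Bpow)
  have "dnm n m = dnm (n - 1) m + (\<Sum>k<m. dnm (n - 1) k * dnm n (m - k - 1))"
    if n_ge: "n \<ge> 2" and m_ge: "m \<ge> 1" for n m
  proof -
    obtain r where "n = Suc r"
      using n_ge by (cases n) auto
    moreover obtain N where "m = Suc N"
      using m_ge by (cases m) auto
    ultimately show ?thesis
      by (simp add: dnm_Suc_Suc lessThan_Suc_atMost)
  qed
  moreover have "dnm n 0 = 1 + dnm (n - 1) 0" if "n \<ge> 2" for n
    using that by (simp add: dnm_0 of_nat_diff)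
  ultimately show ?thesis
    using dnm_0 dnm_1 by simp
qed

end
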